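(* Let $\Sigma$ be a signed graph whose underlying graph is cubic and has girth at least $4$. Then $l(\Sigma) \leq \frac{3}{8}|V(\Sigma)|$.
   Context: A signed graph $\Sigma = (G,\sigma)$ consists of a finite graph $G$ and a sign function $\sigma: E(G) \to \{+1,-1\}$. A circle is a connected nonempty $2$-regular subgraph (loops count as circles of length $1$ and pairs of parallel edges as circles of length $2$, so girth at least $4$ means $G$ has no loops, no multiple edges and no triangles). A circle is positive if the product of the signs of its edges is $+1$ and negative otherwise; $\Sigma$ is balanced if all its circles are positive. The frustration index $l(\Sigma)$ is the smallest number of edges whose deletion from $\Sigma$ leaves a balanced signed graph. Cubic means every vertex has degree exactly $3$. *)

theory Defs
  imports Complex_Main
begin

text \<open>A finite simple graph: vertex set V, edges are 2-element subsets of V.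
  (Girth at least 4 excludes loops and parallel edges, so simple graphs suffice.)
  A signed graph additionally has a sign function sigma on edges with values +1/-1.\<close>

definition simple_graph :: "'a set \<Rightarrow> 'a set set \<Rightarrow> bool" where
  "simple_graph V E \<longleftrightarrow> finite V \<and>
     (\<forall>e\<in>E. \<exists>u v. u \<noteq> v \<and> u \<in> V \<and> v \<in> V \<and> e = {u, v})"

definition signed_graph :: "'a set \<Rightarrow> 'a set set \<Rightarrow> ('a set \<Rightarrow> int) \<Rightarrow> bool" where
  "signed_graph V E \<sigma> \<longleftrightarrow> simple_graph V E \<and> (\<forall>e\<in>E. \<sigma> e = 1 \<or> \<sigma> e = -1)"

definition degree :: "'a set set \<Rightarrow> 'a \<Rightarrow> nat" where
  "degree E v = card {e\<in>E. v \<in> e}"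

definition cubic :: "'a set \<Rightarrow> 'a set set \<Rightarrow> bool" where
  "cubic V E \<longleftrightarrow> (\<forall>v\<in>V. degree E v = 3)"

definition is_circle :: "'a set set \<Rightarrow> 'a set set \<Rightarrow> bool" where
  "is_circle E C \<longleftrightarrow> C \<noteq> {} \<and> finite C \<and> C \<subseteq> E \<and>
     (\<forall>v\<in>\<Union>C. degree C v = 2) \<and>
     (\<forall>u\<in>\<Union>C. \<forall>v\<in>\<Union>C. (\<lambda>x y. {x, y} \<in> C)\<^sup>*\<^sup>* u v)"

definition girth_at_least :: "'a set set \<Rightarrow> nat \<Rightarrow> bool" where
  "girth_at_least E k \<longleftrightarrow> (\<forall>C. is_circle E C \<longrightarrow> card C \<ge> k)"

definition balanced :: "'a set set \<Rightarrow> ('a set \<Rightarrow> int) \<Rightarrow> bool" where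
  "balanced E \<sigma> \<longleftrightarrow> (\<forall>C. is_circle E C \<longrightarrow> (\<Prod>e\<in>C. \<sigma> e) = 1)"

definition frustration_index :: "'a set set \<Rightarrow> ('a set \<Rightarrow> int) \<Rightarrow> nat" where
  "frustration_index E \<sigma> = (LEAST k. \<exists>D. D \<subseteq> E \<and> card D = k \<and> balanced (E - D) \<sigma>)"

end

theory Submission
  imports Defs
begin

text \<open>Switching \<Sigma> at a vertex set X does not change the signs of circles, and the negative
  edges after switching form a balancing set; so l(\<Sigma>) is at most the number N of negative
  edges of a switching minimising it. By minimality, switching once more at any Y cannot
  help, so at most half of the edges of every cut \<delta>(Y) are negative. With Y a single vertex
  this makes the negative edges a matching; with Y = {u, a, b} for a vertex u on a negative
  edge and its two other neighbours a, b (no triangles, so \<delta>(Y) has five edges) it shows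
  that a or b is unmatched. Hence each of the 2N matched vertices has an unmatched neighbour,
  and as each unmatched vertex has only three neighbours, 2N \<le> 3(|V| - 2N).\<close>

definition cut_edges :: "'a set set \<Rightarrow> 'a set \<Rightarrow> 'a set set" where
  "cut_edges E Y = {e\<in>E. odd (card (e \<inter> Y))}"

definition switched_negatives :: "'a set set \<Rightarrow> ('a set \<Rightarrow> int) \<Rightarrow> 'a set \<Rightarrow> 'a set set" where
  "switched_negatives E \<sigma> X = {e\<in>E. (\<sigma> e = -1) \<noteq> odd (card (e \<inter> X))}"

definition half_cut_bounded :: "'a set set \<Rightarrow> 'a set set \<Rightarrow> bool" where
  "half_cut_bounded E N \<longleftrightarrow> (\<forall>Y. card (cut_edges E Y \<inter> N) \<le> card (cut_edges E Y - N))"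

lemma odd_card_Int_doubleton:
  assumes "u \<noteq> v"
  shows "odd (card ({u,v} \<inter> Y)) \<longleftrightarrow> (u \<in> Y) \<noteq> (v \<in> Y)"
  using assms by (cases "u \<in> Y"; cases "v \<in> Y") (auto simp: Int_insert_left)

lemma doubleton_in_cut_edges_iff:
  assumes "u \<noteq> v"
  shows "{u,v} \<in> cut_edges E Y \<longleftrightarrow> {u,v} \<in> E \<and> (u \<in> Y) \<noteq> (v \<in> Y)"
  using odd_card_Int_doubleton[OF assms] by (simp add: cut_edges_def)

lemma girth_at_least_4_no_triangle:
  assumes "girth_at_least E 4" and "{x,y} \<in> E" "{y,z} \<in> E" "{x,z} \<in> E"
    and "x \<noteq> y" "y \<noteq> z" "x \<noteq> z"
  shows False
proof -
  let ?C = "{{x,y},{y,z},{x,z}}"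
  have "card ?C = 3" using assms(5-7) by (auto simp: doubleton_eq_iff)
  moreover have "is_circle E ?C"
    unfolding is_circle_def
  proof (intro conjI ballI)
    show "?C \<noteq> {}" "finite ?C" by simp_all
    show "?C \<subseteq> E" using assms(2-4) by simp
  next
    fix w assume "w \<in> \<Union>?C"
    then consider "w = x" | "w = y" | "w = z" by auto
    then show "degree ?C w = 2"
    proof cases
      case 1
      then have "{e \<in> ?C. w \<in> e} = {{x,y},{x,z}}" using assms(5-7) by auto
      then show ?thesis using assms(5-7) by (simp add: degree_def doubleton_eq_iff)
    next
      case 2
      then have "{e \<in> ?C. w \<in> e} = {{x,y},{y,z}}" using assms(5-7) by auto
      then show ?thesis using assms(5-7) by (simp add: degree_def doubleton_eq_iff)
    next
      case 3
      then have "{e \<in> ?C. w \<in> e} = {{y,z},{x,z}}" using assms(5-7) by auto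
      then show ?thesis using assms(5-7) by (simp add: degree_def doubleton_eq_iff)
    qed
  next
    fix w w' assume "w \<in> \<Union>?C" "w' \<in> \<Union>?C"
    then have "w = w' \<or> {w,w'} \<in> ?C" by (auto simp: insert_commute)
    then show "(\<lambda>a b. {a,b} \<in> ?C)\<^sup>*\<^sup>* w w'" by (auto intro: r_into_rtranclp)
  qed
  ultimately show False using assms(1) by (auto simp: girth_at_least_def)
qed

lemma finite_edges:
  assumes "simple_graph V E"
  shows "finite E"
proof -
  have "E \<subseteq> Pow V" using assms by (fastforce simp: simple_graph_def)
  then show ?thesis using assms by (meson finite_Pow_iff finite_subset simple_graph_def)
qed

locale cubic_graph =
  fixes V :: "'a set" and E :: "'a set set"
  assumes simple: "simple_graph V E" and cubic: "cubic V E"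
begin

lemma finite_V: "finite V"
  using simple by (simp add: simple_graph_def)

lemma finite_E: "finite E"
  using simple by (rule finite_edges)

lemma edge_other_end:
  assumes "e \<in> E" "x \<in> e"
  obtains y where "y \<noteq> x" "x \<in> V" "y \<in> V" "e = {x,y}"
proof -
  obtain u v where "u \<noteq> v" "u \<in> V" "v \<in> V" "e = {u,v}"
    using simple assms(1) unfolding simple_graph_def by blast
  from assms(2) \<open>e = {u,v}\<close> consider "x = u" | "x = v" by auto
  then show thesis
  proof cases
    case 1
    then show thesis using that[of v] \<open>u \<noteq> v\<close> \<open>u \<in> V\<close> \<open>v \<in> V\<close> \<open>e = {u,v}\<close> by simp
  next
    case 2
    then show thesis using that[of u] \<open>u \<noteq> v\<close> \<open>u \<in> V\<close> \<open>v \<in> V\<close> \<open>e = {u,v}\<close>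
      by (simp add: insert_commute)
  qed
qed

lemma card_edge: "e \<in> E \<Longrightarrow> card e = 2"
  using simple by (auto simp: simple_graph_def)

lemma card_incident: "w \<in> V \<Longrightarrow> card {e\<in>E. w \<in> e} = 3"
  using cubic by (simp add: cubic_def degree_def)

lemma incident_edges:
  assumes "{w,v} \<in> E" "w \<noteq> v"
  obtains a b where "distinct [w, v, a, b]" "{e\<in>E. w \<in> e} = {{w,v},{w,a},{w,b}}"
proof -
  have "w \<in> V" using assms by (auto elim: edge_other_end)
  then have "card ({e\<in>E. w \<in> e} - {{w,v}}) = 2"
    using assms card_incident by (simp add: card_Diff_singleton finite_E)
  then obtain f1 f2 where f: "f1 \<noteq> f2" "{e\<in>E. w \<in> e} - {{w,v}} = {f1,f2}"
    by (auto simp: card_2_iff)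
  then have "f1 \<in> E" "w \<in> f1" "f2 \<in> E" "w \<in> f2" by auto
  obtain a where a: "a \<noteq> w" "f1 = {w,a}" using \<open>f1 \<in> E\<close> \<open>w \<in> f1\<close> by (rule edge_other_end) auto
  obtain b where b: "b \<noteq> w" "f2 = {w,b}" using \<open>f2 \<in> E\<close> \<open>w \<in> f2\<close> by (rule edge_other_end) auto
  have "distinct [w, v, a, b]" using f a b assms(2)
    by (simp add: doubleton_eq_iff) (metis Diff_iff insertCI doubleton_eq_iff)
  moreover have "{e\<in>E. w \<in> e} = {{w,v},f1,f2}" using f assms(1) by blast
  ultimately show thesis using a b by (intro that[of a b]) simp_all
qed

lemma finite_cut_edges: "finite (cut_edges E Y)"
  using finite_E by (simp add: cut_edges_def)

lemma cut_edges_eq: "cut_edges E Y = {e\<in>E. e \<inter> Y \<noteq> {} \<and> \<not> e \<subseteq> Y}"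
proof -
  have "odd (card (e \<inter> Y)) \<longleftrightarrow> e \<inter> Y \<noteq> {} \<and> \<not> e \<subseteq> Y" if "e \<in> E" for e
  proof -
    obtain x y where "x \<noteq> y" "e = {x,y}"
      using \<open>e \<in> E\<close> simple by (auto simp: simple_graph_def)
    then show ?thesis using odd_card_Int_doubleton[of x y Y] by auto
  qed
  then show ?thesis by (auto simp: cut_edges_def)
qed

lemma cut_edges_singleton: "cut_edges E {w} = {e\<in>E. w \<in> e}"
  by (auto simp: cut_edges_def Int_insert_right)

lemma card_Union_matching:
  assumes "N \<subseteq> E" and matching: "\<And>e e' w. e \<in> N \<Longrightarrow> e' \<in> N \<Longrightarrow> w \<in> e \<Longrightarrow> w \<in> e' \<Longrightarrow> e = e'"
  shows "card (\<Union>N) = 2 * card N"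
proof -
  have two: "card e = 2" if "e \<in> N" for e
    using that assms(1) card_edge by blast
  have "pairwise disjnt N"
    unfolding pairwise_def disjnt_def using matching by blast
  then have "card (\<Union>N) = sum card N"
    by (rule card_Union_disjoint) (use two in \<open>simp add: card_ge_0_finite\<close>)
  also have "\<dots> = 2 * card N" using two by simp
  finally show ?thesis .
qed

text \<open>Choosing a neighbour g w outside S for each w \<in> S, the map w \<mapsto> {w, g w} injects S
  into the set of edges at vertices of V - S.\<close>
lemma card_le_if_neighbour_outside:
  assumes "S \<subseteq> V" and nbr: "\<And>w. w \<in> S \<Longrightarrow> \<exists>x\<in>V - S. {w,x} \<in> E"
  shows "card S \<le> 3 * card (V - S)"
proof -
  obtain g where g: "\<And>w. w \<in> S \<Longrightarrow> g w \<in> V - S \<and> {w, g w} \<in> E"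
    using nbr by metis
  have "inj_on (\<lambda>w. {w, g w}) S"
    by (rule inj_onI) (use g in \<open>auto simp: doubleton_eq_iff\<close>)
  moreover have "(\<lambda>w. {w, g w}) ` S \<subseteq> (\<Union>x\<in>V - S. {e\<in>E. x \<in> e})"
    using g by auto
  ultimately have "card S \<le> card (\<Union>x\<in>V - S. {e\<in>E. x \<in> e})"
    by (intro card_inj_on_le) (auto intro: finite_subset[OF _ finite_E])
  also have "\<dots> \<le> (\<Sum>x\<in>V - S. card {e\<in>E. x \<in> e})"
    by (rule card_UN_le) (simp add: finite_V)
  also have "\<dots> = 3 * card (V - S)" by (simp add: card_incident)
  finally show ?thesis .
qed

end

locale half_cut_bounded_edges = cubic_graph +
  fixes N :: "'a set set"
  assumes N_subset: "N \<subseteq> E" and half: "half_cut_bounded E N"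
begin

lemma card_cut_edges_Int_le: "2 * card (cut_edges E Y \<inter> N) \<le> card (cut_edges E Y)"
proof -
  have "card (cut_edges E Y) = card (cut_edges E Y \<inter> N) + card (cut_edges E Y - N)"
    by (rule card_Int_Diff[OF finite_cut_edges])
  then show ?thesis using half by (simp add: half_cut_bounded_def)
qed

lemma matching:
  assumes "e \<in> N" "e' \<in> N" "w \<in> e" "w \<in> e'"
  shows "e = e'"
proof (rule ccontr)
  assume "e \<noteq> e'"
  then have "card {e, e'} = 2" by simp
  moreover have "{e, e'} \<subseteq> cut_edges E {w} \<inter> N"
    using assms N_subset by (auto simp: cut_edges_singleton)
  ultimately have "2 \<le> card (cut_edges E {w} \<inter> N)"
    by (metis card_mono finite_cut_edges finite_Int)
  moreover have "w \<in> V" using assms N_subset by (auto elim: edge_other_end)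
  ultimately show False
    using card_cut_edges_Int_le[of "{w}"] card_incident by (simp add: cut_edges_singleton)
qed

text \<open>Cutting off u together with its neighbours a and b: without triangles the cut has
  only five edges, but if a and b were covered it would contain three edges of N.\<close>
lemma not_both_neighbours_covered:
  assumes girth: "girth_at_least E 4" and uv: "{u,v} \<in> N"
    and inc: "{e\<in>E. u \<in> e} = {{u,v},{u,a},{u,b}}" and d: "distinct [u, v, a, b]"
  shows "a \<notin> \<Union>N \<or> b \<notin> \<Union>N"
proof (rule ccontr)
  assume "\<not> ?thesis"
  then obtain ea eb where ea: "ea \<in> N" "a \<in> ea" and eb: "eb \<in> N" "b \<in> eb" by auto
  obtain a' where a': "a' \<noteq> a" "a \<in> V" "ea = {a,a'}"
    using ea N_subset by (auto elim: edge_other_end)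
  obtain b' where b': "b' \<noteq> b" "b \<in> V" "eb = {b,b'}"
    using eb N_subset by (auto elim: edge_other_end)
  have ua: "{u,a} \<in> E" and ub: "{u,b} \<in> E" using inc by auto
  have ab: "{a,b} \<notin> E"
    using girth_at_least_4_no_triangle[OF girth ua _ ub] d by (auto simp: insert_commute)
  have "a' \<noteq> u" using matching[OF ea(1) uv, of u] a' d by auto
  moreover have "a' \<noteq> b" using a' ea N_subset ab by auto
  ultimately have "ea \<in> cut_edges E {u,a,b}"
    using doubleton_in_cut_edges_iff[of a a'] a' ea N_subset by auto
  have "b' \<noteq> u" using matching[OF eb(1) uv, of u] b' d by auto
  moreover have "b' \<noteq> a" using b' eb N_subset ab by (auto simp: insert_commute)
  ultimately have "eb \<in> cut_edges E {u,a,b}"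
    using doubleton_in_cut_edges_iff[of b b'] b' eb N_subset by auto
  moreover have "{u,v} \<in> cut_edges E {u,a,b}"
    using doubleton_in_cut_edges_iff[of u v] uv N_subset d by auto
  ultimately have "{{u,v}, ea, eb} \<subseteq> cut_edges E {u,a,b} \<inter> N"
    using \<open>ea \<in> cut_edges E {u,a,b}\<close> uv ea eb by simp
  moreover have "card {{u,v}, ea, eb} = 3"
    using a' b' d \<open>a' \<noteq> b\<close> by (auto simp: doubleton_eq_iff)
  ultimately have "3 \<le> card (cut_edges E {u,a,b} \<inter> N)"
    by (metis card_mono finite_cut_edges finite_Int)
  let ?Ea = "{e\<in>E. a \<in> e} - {{u,a}}" and ?Eb = "{e\<in>E. b \<in> e} - {{u,b}}"
  have "cut_edges E {u,a,b} \<subseteq> {{u,v}} \<union> ?Ea \<union> ?Eb"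
  proof
    fix e assume "e \<in> cut_edges E {u,a,b}"
    then have e: "e \<in> E" "e \<inter> {u,a,b} \<noteq> {}" "\<not> e \<subseteq> {u,a,b}"
      by (simp_all add: cut_edges_eq)
    then consider "u \<in> e" | "u \<notin> e" "a \<in> e" | "u \<notin> e" "b \<in> e" by blast
    then show "e \<in> {{u,v}} \<union> ?Ea \<union> ?Eb"
    proof cases
      case 1
      then have "e \<in> {{u,v},{u,a},{u,b}}" using inc e(1) by blast
      then show ?thesis using e(3) by auto
    qed (use e(1) in auto)
  qed
  then have "card (cut_edges E {u,a,b}) \<le> card ({{u,v}} \<union> ?Ea \<union> ?Eb)"
    by (rule card_mono[rotated]) (simp add: finite_E)
  also have "\<dots> \<le> card {{u,v}} + card ?Ea + card ?Eb"
    by (meson card_Un_le add_right_mono order_trans)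
  also have "\<dots> = 5"
    using card_incident[OF \<open>a \<in> V\<close>] card_incident[OF \<open>b \<in> V\<close>] ua ub
    by (simp add: card_Diff_singleton finite_E)
  finally show False
    using card_cut_edges_Int_le[of "{u,a,b}"] \<open>3 \<le> card (cut_edges E {u,a,b} \<inter> N)\<close> by linarith
qed

lemma covered_has_uncovered_neighbour:
  assumes girth: "girth_at_least E 4" and "w \<in> \<Union>N"
  shows "\<exists>x\<in>V - \<Union>N. {w,x} \<in> E"
proof -
  obtain e where "e \<in> N" "w \<in> e" using assms(2) by auto
  then obtain v where "v \<noteq> w" "e = {w,v}"
    using N_subset by (auto elim: edge_other_end)
  then obtain a b where d: "distinct [w, v, a, b]" and inc: "{e\<in>E. w \<in> e} = {{w,v},{w,a},{w,b}}"
    using incident_edges \<open>e \<in> N\<close> N_subset by blast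
  then have "{w,a} \<in> E" "{w,b} \<in> E" by auto
  then have "a \<in> V" "b \<in> V" by (auto elim: edge_other_end)
  moreover have "a \<notin> \<Union>N \<or> b \<notin> \<Union>N"
    using not_both_neighbours_covered[OF girth _ inc d] \<open>e \<in> N\<close> \<open>e = {w,v}\<close> by simp
  ultimately show ?thesis using \<open>{w,a} \<in> E\<close> \<open>{w,b} \<in> E\<close> by blast
qed

lemma eight_card_le_three_card_V:
  assumes "girth_at_least E 4"
  shows "8 * card N \<le> 3 * card V"
proof -
  have "\<Union>N \<subseteq> V" using N_subset by (auto elim: edge_other_end)
  then have "card (\<Union>N) \<le> 3 * card (V - \<Union>N)"
    using card_le_if_neighbour_outside covered_has_uncovered_neighbour[OF assms] by blast
  moreover have "card (V - \<Union>N) = card V - card (\<Union>N)"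
    using \<open>\<Union>N \<subseteq> V\<close> finite_V by (simp add: card_Diff_subset finite_subset)
  moreover have "card (\<Union>N) \<le> card V"
    using \<open>\<Union>N \<subseteq> V\<close> finite_V by (simp add: card_mono)
  ultimately show ?thesis
    using card_Union_matching[OF N_subset matching] by simp
qed

end

text \<open>Every vertex of a circle C lies on exactly two edges of C, so the switching signs
  (-1)^|e \<inter> X| multiply to (-1)^(2 |\<Union>C \<inter> X|) around C.\<close>
lemma balanced_Diff_switched_negatives:
  assumes sg: "signed_graph V E \<sigma>"
  shows "balanced (E - switched_negatives E \<sigma> X) \<sigma>"
  unfolding balanced_def
proof (intro allI impI)
  fix C assume "is_circle (E - switched_negatives E \<sigma> X) C"
  then have CE: "C \<subseteq> E - switched_negatives E \<sigma> X" and fC: "finite C"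
    and deg: "\<forall>v\<in>\<Union>C. degree C v = 2"
    by (auto simp: is_circle_def)
  have "finite (\<Union>C)"
    using fC CE sg by (fastforce simp: signed_graph_def simple_graph_def)
  have sign: "\<sigma> e = (-1) ^ card (e \<inter> X)" if "e \<in> C" for e
  proof -
    have "\<sigma> e = 1 \<or> \<sigma> e = -1" "(\<sigma> e = -1) \<longleftrightarrow> odd (card (e \<inter> X))"
      using that CE sg by (auto simp: signed_graph_def switched_negatives_def)
    then show ?thesis by (cases "even (card (e \<inter> X))") auto
  qed
  have "(\<Sum>e\<in>C. card (e \<inter> X)) = (\<Sum>e\<in>C. \<Sum>x\<in>\<Union>C \<inter> X. if x \<in> e then 1 else 0)"
  proof (rule sum.cong)
    fix e assume "e \<in> C"
    then have "e \<inter> X = {x \<in> \<Union>C \<inter> X. x \<in> e}" by auto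
    then show "card (e \<inter> X) = (\<Sum>x\<in>\<Union>C \<inter> X. if x \<in> e then 1 else 0)"
      using \<open>finite (\<Union>C)\<close> by (simp add: sum.inter_filter[symmetric])
  qed simp
  also have "\<dots> = (\<Sum>x\<in>\<Union>C \<inter> X. \<Sum>e\<in>C. if x \<in> e then 1 else 0)" by (rule sum.swap)
  also have "\<dots> = (\<Sum>x\<in>\<Union>C \<inter> X. 2)"
  proof (rule sum.cong)
    fix x assume "x \<in> \<Union>C \<inter> X"
    then have "degree C x = 2" using deg by auto
    then show "(\<Sum>e\<in>C. if x \<in> e then 1 else 0) = (2::nat)"
      using fC by (simp add: degree_def sum.inter_filter[symmetric])
  qed simp
  finally have "(\<Sum>e\<in>C. card (e \<inter> X)) = 2 * card (\<Union>C \<inter> X)" by simp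
  then show "(\<Prod>e\<in>C. \<sigma> e) = 1"
    using sign by (simp add: power_sum[symmetric] power_mult)
qed

lemma frustration_index_le_card_switched_negatives:
  assumes "signed_graph V E \<sigma>"
  shows "frustration_index E \<sigma> \<le> card (switched_negatives E \<sigma> X)"
  unfolding frustration_index_def
  by (rule Least_le, rule exI[of _ "switched_negatives E \<sigma> X"])
     (use balanced_Diff_switched_negatives[OF assms] in \<open>auto simp: switched_negatives_def\<close>)

lemma switched_negatives_sym_diff:
  assumes "signed_graph V E \<sigma>"
  shows "switched_negatives E \<sigma> (sym_diff X Y) = sym_diff (switched_negatives E \<sigma> X) (cut_edges E Y)"
proof -
  have "odd (card (e \<inter> sym_diff X Y)) \<longleftrightarrow> odd (card (e \<inter> X)) \<noteq> odd (card (e \<inter> Y))"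
    if "e \<in> E" for e
  proof -
    obtain u v where "u \<noteq> v" "e = {u,v}"
      using assms \<open>e \<in> E\<close> by (auto simp: signed_graph_def simple_graph_def)
    then show ?thesis by (simp add: odd_card_Int_doubleton) blast
  qed
  then show ?thesis unfolding switched_negatives_def cut_edges_def by auto
qed

lemma half_cut_bounded_min_switched_negatives:
  assumes sg: "signed_graph V E \<sigma>"
    and min: "\<And>X. card (switched_negatives E \<sigma> X0) \<le> card (switched_negatives E \<sigma> X)"
  shows "half_cut_bounded E (switched_negatives E \<sigma> X0)"
  unfolding half_cut_bounded_def
proof
  fix Y
  let ?N = "switched_negatives E \<sigma> X0" and ?D = "cut_edges E Y"
  have "finite E" using sg finite_edges by (auto simp: signed_graph_def)
  then have fin: "finite ?N" "finite ?D"
    by (simp_all add: switched_negatives_def cut_edges_def)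
  have "card ?N \<le> card (sym_diff ?N ?D)"
    using min[of "sym_diff X0 Y"] switched_negatives_sym_diff[OF sg] by simp
  also have "\<dots> = card (?N - ?D) + card (?D - ?N)"
    using fin by (intro card_Un_disjoint) auto
  also have "\<dots> = card ?N - card (?D \<inter> ?N) + card (?D - ?N)"
    using fin by (simp add: card_Diff_subset_Int Int_commute)
  finally show "card (?D \<inter> ?N) \<le> card (?D - ?N)"
    using card_mono[OF fin(1), of "?D \<inter> ?N"] by auto
qed

theorem theorem3:
  fixes V :: "'a set" and E :: "'a set set" and \<sigma> :: "'a set \<Rightarrow> int"
  assumes "signed_graph V E \<sigma>"
    and "cubic V E"
    and "girth_at_least E 4"
  shows "real (frustration_index E \<sigma>) \<le> 3 / 8 * real (card V)"
proof -
  obtain X0 where min: "\<And>X. card (switched_negatives E \<sigma> X0) \<le> card (switched_negatives E \<sigma> X)"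
    using ex_has_least_nat[of "\<lambda>_. True" undefined "card \<circ> switched_negatives E \<sigma>"] by auto
  interpret half_cut_bounded_edges V E "switched_negatives E \<sigma> X0"
    using assms(1,2) half_cut_bounded_min_switched_negatives[OF assms(1) min]
    by unfold_locales (auto simp: signed_graph_def switched_negatives_def)
  have "frustration_index E \<sigma> \<le> card (switched_negatives E \<sigma> X0)"
    by (rule frustration_index_le_card_switched_negatives[OF assms(1)])
  with eight_card_le_three_card_V[OF assms(3)] show ?thesis by linarith
qed

end
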